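(* Let $d\ge1$, $M>0$, and let $f:[0,1]^d\to\mathbb{R}$ satisfy $|f(x)-f(y)|\le M\|x-y\|_\infty$ for all $x,y\in[0,1]^d$; let $g(x)=f(x)\bmod 1$. Let $m>1$ be an integer, $x_i=\frac{i-1}{m-1}$ for $i\in[m]$, and for $\mathbf{i}=(i_1,\dots,i_d)\in[m]^d$ let $x_{\mathbf i}=(x_{i_1},\dots,x_{i_d})$. Let $\delta\in[0,1/2]$ and $\hat g:[0,1]^d\to[0,1)$ satisfy $d_w(\hat g(x_{\mathbf i}),g(x_{\mathbf i}))\le\delta$ for all $\mathbf i\in[m]^d$. For each $\mathbf i$ let $\eta_{\mathbf i}\in[-\delta,\delta]$ be such that $\hat g(x_{\mathbf i})=(f(x_{\mathbf i})+\eta_{\mathbf i})\bmod 1$, and set $\hat f(x_{\mathbf i}):=f(x_{\mathbf i})+\eta_{\mathbf i}$. If $2\delta+\frac{M}{m-1}<\frac12$, then for each $j\in[d]$ and each $\mathbf i\in[m]^d$ with $i_j>1$, $$D_j\hat f(x_{\mathbf i})=\begin{cases}D_j\hat g(x_{\mathbf i}) & \text{if } |D_j\hat g(x_{\mathbf i})|<1/2,\\ 1+D_j\hat g(x_{\mathbf i}) & \text{if } D_j\hat g(x_{\mathbf i})<-1/2,\\ -1+D_j\hat g(x_{\mathbf i}) & \text{if } D_j\hat g(x_{\mathbf i})>1/2.\end{cases}$$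
   Context: For $a\in\mathbb{R}$, $a\bmod1=a-\lfloor a\rfloor\in[0,1)$. The wrap-around distance on $[0,1)$ is $d_w(a,b)=\min(|a-b|,1-|a-b|)$. $[m]=\{1,\dots,m\}$. For a function $h$ defined on the grid points and $\mathbf i\in[m]^d$ with $i_j>1$, the finite difference along coordinate $j$ is $D_jh(x_{\mathbf i})=h(x_{i_1},\dots,x_{i_j},\dots,x_{i_d})-h(x_{i_1},\dots,x_{i_j-1},\dots,x_{i_d})$. *)

theory Defs
  imports "HOL-Analysis.Analysis"
begin

definition mod1 :: "real \<Rightarrow> real" where
  "mod1 a = a - of_int \<lfloor>a\<rfloor>"

definition dw :: "real \<Rightarrow> real \<Rightarrow> real" where
  "dw a b = min \<bar>a - b\<bar> (1 - \<bar>a - b\<bar>)"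

definition linf_dist :: "real^'n \<Rightarrow> real^'n \<Rightarrow> real" where
  "linf_dist x y = Max (range (\<lambda>k. \<bar>x$k - y$k\<bar>))"

definition unit_cube :: "(real^'n) set" where
  "unit_cube = {x. \<forall>k. 0 \<le> x$k \<and> x$k \<le> 1}"

definition grid_pt :: "nat \<Rightarrow> ('n \<Rightarrow> nat) \<Rightarrow> real^'n" where
  "grid_pt m i = (\<chi> k. (real (i k) - 1) / (real m - 1))"

definition Dj :: "'n \<Rightarrow> (('n \<Rightarrow> nat) \<Rightarrow> real) \<Rightarrow> ('n \<Rightarrow> nat) \<Rightarrow> real" where
  "Dj j h i = h i - h (i(j := i j - 1))"

end

theory Submission
  imports Defs
begin

text \<open>Adjacent grid points are \<open>1/(m-1)\<close> apart, so by the Lipschitz bound the values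
  \<open>f + \<eta>\<close> at neighbours differ by less than \<open>1/2\<close>. Their reductions mod 1 (the values of \<open>ghat\<close>)
  differ from that difference by an integer, which the bound \<open>1/2\<close> pins down to \<open>0\<close> or \<open>\<plusminus>1\<close>
  according to the size and sign of the difference of the reductions.\<close>

lemma mod1_bounds: "0 \<le> mod1 a" "mod1 a < 1"
  unfolding mod1_def by linarith+

lemma mod1_diff_unwrap:
  assumes close: "\<bar>a - b\<bar> < 1/2"
  defines "D \<equiv> mod1 a - mod1 b"
  shows "(\<bar>D\<bar> < 1/2 \<longrightarrow> a - b = D) \<and> (D < -1/2 \<longrightarrow> a - b = 1 + D) \<and> (D > 1/2 \<longrightarrow> a - b = -1 + D)"
proof -
  define k where "k = \<lfloor>a\<rfloor> - \<lfloor>b\<rfloor>"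
  have D_eq: "D = (a - b) - of_int k"
    unfolding D_def k_def mod1_def by simp
  have D_range: "-1 < D" "D < 1"
    using mod1_bounds[of a] mod1_bounds[of b] unfolding D_def by linarith+
  show ?thesis
  proof (intro conjI impI)
    assume "\<bar>D\<bar> < 1/2"
    then have "k = 0" using D_eq close by linarith
    then show "a - b = D" using D_eq by simp
  next
    assume "D < -1/2"
    then have "k = 1" using D_eq D_range close by linarith
    then show "a - b = 1 + D" using D_eq by simp
  next
    assume "D > 1/2"
    then have "k = -1" using D_eq D_range close by linarith
    then show "a - b = -1 + D" using D_eq by simp
  qed
qed

lemma grid_pt_in_unit_cube:
  assumes "m > 1" "\<forall>k. i k \<in> {1..m}"
  shows "grid_pt m i \<in> unit_cube"
proof -
  have "0 \<le> (real (i k) - 1) / (real m - 1) \<and> (real (i k) - 1) / (real m - 1) \<le> 1" for k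
  proof -
    have "1 \<le> i k" "i k \<le> m"
      using assms(2) by auto
    then show ?thesis
      using assms(1) by (simp add: divide_simps)
  qed
  then show ?thesis
    unfolding unit_cube_def grid_pt_def by simp
qed

lemma grid_index_predecessor:
  fixes i :: "'n \<Rightarrow> nat"
  assumes "\<forall>k. i k \<in> {1..m}" "i j > 1"
  shows "\<forall>k. (i(j := i j - 1)) k \<in> {1..m}"
proof -
  have "i j \<le> m"
    using assms(1) by simp
  then have "1 \<le> i j - 1" "i j - 1 \<le> m"
    using assms(2) by auto
  then show ?thesis
    using assms(1) by simp
qed

lemma linf_dist_le:
  fixes x y :: "real^'n"
  assumes "\<And>k. \<bar>x$k - y$k\<bar> \<le> c"
  shows "linf_dist x y \<le> c"
  unfolding linf_dist_def using assms by (subst Max_le_iff) auto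

lemma linf_dist_grid_predecessor:
  assumes "m > 1" "i j \<ge> 1"
  shows "linf_dist (grid_pt m i) (grid_pt m (i(j := i j - 1))) \<le> 1 / (real m - 1)"
proof (rule linf_dist_le)
  fix k
  have "real (i j - 1) = real (i j) - 1"
    using assms(2) by simp
  then show "\<bar>grid_pt m i $ k - grid_pt m (i(j := i j - 1)) $ k\<bar> \<le> 1 / (real m - 1)"
    using assms(1) unfolding grid_pt_def by (cases "k = j") (simp_all add: divide_simps)
qed

lemma lipschitz_grid_predecessor:
  assumes lip: "\<forall>x\<in>unit_cube. \<forall>y\<in>unit_cube. \<bar>f x - f y\<bar> \<le> M * linf_dist x y"
    and "M \<ge> 0" "m > 1" "\<forall>k. i k \<in> {1..m}" "i j > 1"
  shows "\<bar>f (grid_pt m i) - f (grid_pt m (i(j := i j - 1)))\<bar> \<le> M / (real m - 1)"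
proof -
  have "grid_pt m i \<in> unit_cube" "grid_pt m (i(j := i j - 1)) \<in> unit_cube"
    using grid_pt_in_unit_cube[OF assms(3)] grid_index_predecessor[OF assms(4,5)] assms(4) by blast+
  then have "\<bar>f (grid_pt m i) - f (grid_pt m (i(j := i j - 1)))\<bar>
      \<le> M * linf_dist (grid_pt m i) (grid_pt m (i(j := i j - 1)))"
    using lip by blast
  also have "\<dots> \<le> M * (1 / (real m - 1))"
    using linf_dist_grid_predecessor[of m i j] assms(2-5) by (intro mult_left_mono) auto
  finally show ?thesis by simp
qed

theorem mainTheorem3:
  fixes f ghat :: "real^'n \<Rightarrow> real" and M \<delta> :: real and m :: nat
    and \<eta> :: "('n \<Rightarrow> nat) \<Rightarrow> real"
  assumes M_pos: "M > 0"
    and lip: "\<forall>x\<in>unit_cube. \<forall>y\<in>unit_cube. \<bar>f x - f y\<bar> \<le> M * linf_dist x y"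
    and m_gt: "m > 1"
    and delta: "0 \<le> \<delta>" "\<delta> \<le> 1/2"
    and ghat_range: "\<forall>x\<in>unit_cube. 0 \<le> ghat x \<and> ghat x < 1"
    and ghat_close: "\<forall>i. (\<forall>k. i k \<in> {1..m}) \<longrightarrow>
                       dw (ghat (grid_pt m i)) (mod1 (f (grid_pt m i))) \<le> \<delta>"
    and eta: "\<forall>i. (\<forall>k. i k \<in> {1..m}) \<longrightarrow>
                 \<eta> i \<in> {-\<delta>..\<delta>} \<and> ghat (grid_pt m i) = mod1 (f (grid_pt m i) + \<eta> i)"
    and small: "2 * \<delta> + M / (real m - 1) < 1/2"
    and i_grid: "\<forall>k. i k \<in> {1..m}"
    and ij: "i j > 1"
  shows "let Df = Dj j (\<lambda>i'. f (grid_pt m i') + \<eta> i') i;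
             Dg = Dj j (\<lambda>i'. ghat (grid_pt m i')) i
         in (\<bar>Dg\<bar> < 1/2 \<longrightarrow> Df = Dg) \<and>
            (Dg < -1/2 \<longrightarrow> Df = 1 + Dg) \<and>
            (Dg > 1/2 \<longrightarrow> Df = -1 + Dg)"
proof -
  define i' where "i' = i(j := i j - 1)"
  have i'_grid: "\<forall>k. i' k \<in> {1..m}"
    unfolding i'_def using grid_index_predecessor[OF i_grid ij] .
  have eta_i: "\<eta> i \<in> {-\<delta>..\<delta>}" "ghat (grid_pt m i) = mod1 (f (grid_pt m i) + \<eta> i)"
    using eta i_grid by blast+
  have eta_i': "\<eta> i' \<in> {-\<delta>..\<delta>}" "ghat (grid_pt m i') = mod1 (f (grid_pt m i') + \<eta> i')"
    using eta i'_grid by blast+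
  have "\<bar>f (grid_pt m i) - f (grid_pt m i')\<bar> \<le> M / (real m - 1)"
    unfolding i'_def using lipschitz_grid_predecessor[OF lip _ m_gt i_grid ij] M_pos by simp
  then have close: "\<bar>(f (grid_pt m i) + \<eta> i) - (f (grid_pt m i') + \<eta> i')\<bar> < 1/2"
    using eta_i(1) eta_i'(1) small unfolding atLeastAtMost_iff by linarith
  show ?thesis
    using mod1_diff_unwrap[OF close]
    unfolding Let_def Dj_def i'_def[symmetric] eta_i(2) eta_i'(2) .
qed

end
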